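(* Let $\mathcal G=(\mathcal V,\mathcal E)$ be a connected undirected graph on $N\ge 2$ nodes, let $a(0)\in\mathbb R^N$ be arbitrary, let $p\in[0,1]$, and let $(a(l))_{l\ge 0}$ be generated by the sample greedy gossip (SGG) iteration with node activation probability $p$. Then $$\lim_{l\to\infty}\mathbb E\big[\|a(l)-\bar a\|^2\big]=0,$$ i.e. SGG converges (in mean square) to the average state $\bar a$.
   Context: Graph: $\mathcal V=\{1,\dots,N\}$, and $\mathcal N_s=\{t\in\mathcal V: (s,t)\in\mathcal E,\ t\neq s\}$ is the neighbour set of node $s$ (nonempty for all $s$ by connectivity). Each node $s$ holds a scalar $a_s(l)$; $a(l)=(a_1(l),\dots,a_N(l))^T$. $\bar a\in\mathbb R^N$ is the vector all of whose entries equal $\frac1N\sum_{s=1}^N a_s(0)$. $\|\cdot\|$ is the Euclidean norm. SGG iteration (step $l\ge1$, all random choices independent across steps and of the past): a node $s$ is chosen uniformly at random from $\mathcal V$; each $t\in\mathcal N_s$ independently joins an active set $\mathcal A_s\subseteq\mathcal N_s$ with probability $p$. If $\mathcal A_s\neq\emptyset$, let $t^*$ be a maximiser of $(a_s(l-1)-a_t(l-1))^2$ over $t\in\mathcal A_s$ (ties broken arbitrarily); if $\mathcal A_s=\emptyset$, let $t^*$ be chosen uniformly at random from $\mathcal N_s$. Then $a_s(l)=a_{t^*}(l)=\tfrac12\big(a_s(l-1)+a_{t^*}(l-1)\big)$, and $a_u(l)=a_u(l-1)$ for all $u\notin\{s,t^*\}$. *)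

theory Defs
  imports "HOL-Analysis.Analysis" "HOL-Probability.Probability"
begin

definition nbrs :: "'a set \<Rightarrow> ('a \<Rightarrow> 'a \<Rightarrow> bool) \<Rightarrow> 'a \<Rightarrow> 'a set" where
  "nbrs V E s = {t \<in> V. E s t \<and> t \<noteq> s}"

definition connected_undirected_graph :: "'a set \<Rightarrow> ('a \<Rightarrow> 'a \<Rightarrow> bool) \<Rightarrow> bool" where
  "connected_undirected_graph V E \<longleftrightarrow>
     finite V \<and> (\<forall>u v. E u v \<longrightarrow> u \<in> V \<and> v \<in> V) \<and> (\<forall>u v. E u v \<longrightarrow> E v u) \<and>
     (\<forall>u\<in>V. \<forall>v\<in>V. (\<lambda>x y. E x y \<and> x \<noteq> y)\<^sup>*\<^sup>* u v)"

definition valid_tiebreak :: "'a set \<Rightarrow> ('a \<Rightarrow> 'a \<Rightarrow> bool) \<Rightarrow>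
    (nat \<Rightarrow> ('a \<Rightarrow> real) \<Rightarrow> 'a \<Rightarrow> 'a set \<Rightarrow> 'a) \<Rightarrow> bool" where
  "valid_tiebreak V E sel \<longleftrightarrow>
     (\<forall>l a s A. s \<in> V \<longrightarrow> A \<subseteq> nbrs V E s \<longrightarrow> A \<noteq> {} \<longrightarrow>
        sel l a s A \<in> A \<and> (\<forall>t\<in>A. (a s - a t)^2 \<le> (a s - a (sel l a s A))^2))"

definition avg_pair :: "('a \<Rightarrow> real) \<Rightarrow> 'a \<Rightarrow> 'a \<Rightarrow> ('a \<Rightarrow> real)" where
  "avg_pair a s t = (let m = (a s + a t) / 2 in a(s := m, t := m))"

definition sgg_step :: "'a set \<Rightarrow> ('a \<Rightarrow> 'a \<Rightarrow> bool) \<Rightarrow> real \<Rightarrow>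
    (nat \<Rightarrow> ('a \<Rightarrow> real) \<Rightarrow> 'a \<Rightarrow> 'a set \<Rightarrow> 'a) \<Rightarrow> nat \<Rightarrow> ('a \<Rightarrow> real) \<Rightarrow> ('a \<Rightarrow> real) pmf" where
  "sgg_step V E p sel l a =
     do {
       s \<leftarrow> pmf_of_set V;
       act \<leftarrow> Pi_pmf (nbrs V E s) False (\<lambda>_. bernoulli_pmf p);
       let A = {t \<in> nbrs V E s. act t};
       t \<leftarrow> (if A \<noteq> {} then return_pmf (sel l a s A) else pmf_of_set (nbrs V E s));
       return_pmf (avg_pair a s t)
     }"

primrec sgg_dist :: "'a set \<Rightarrow> ('a \<Rightarrow> 'a \<Rightarrow> bool) \<Rightarrow> real \<Rightarrow>
    (nat \<Rightarrow> ('a \<Rightarrow> real) \<Rightarrow> 'a \<Rightarrow> 'a set \<Rightarrow> 'a) \<Rightarrow> ('a \<Rightarrow> real) \<Rightarrow> nat \<Rightarrow> ('a \<Rightarrow> real) pmf" where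
  "sgg_dist V E p sel a0 0 = return_pmf a0"
| "sgg_dist V E p sel a0 (Suc l) = bind_pmf (sgg_dist V E p sel a0 l) (sgg_step V E p sel (Suc l))"

end

theory Submission
  imports Defs
begin

text \<open>The sum of squared deviations from the average is a Lyapunov function: averaging the
  values at two nodes \<open>s, t\<close> conserves the average and lowers the sum by \<open>(a s - a t)\<^sup>2 / 2\<close>.
  Let \<open>d\<close> be the degree of the chosen node \<open>s\<close> and \<open>M\<close> its largest squared neighbour gap. With
  probability \<open>p\<close> a neighbour realising \<open>M\<close> is active, and then the greedy choice gains \<open>M\<close>;
  with probability \<open>(1 - p)\<^sup>d\<close> no neighbour is active and a uniform neighbour gains at least
  \<open>M / d\<close>. By Bernoulli's inequality \<open>d p + (1 - p)\<^sup>d \<ge> 1\<close>, so the expected gain is at least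
  \<open>M / d\<close>. Along paths of the connected graph every deviation from the average is bounded by
  the largest neighbour gaps (a Poincare-type inequality), so the expected Lyapunov function
  contracts by the factor \<open>1 - 1/(2 N\<^sup>7)\<close> in every step.\<close>

lemma expectation_bind_pmf_finite:
  fixes h :: "'b \<Rightarrow> real"
  assumes "finite (set_pmf M)" "\<And>x. x \<in> set_pmf M \<Longrightarrow> finite (set_pmf (f x))"
  shows "measure_pmf.expectation (bind_pmf M f) h =
         measure_pmf.expectation M (\<lambda>x. measure_pmf.expectation (f x) h)"
  using assms
  by (subst pmf_expectation_bind[of "set_pmf M"]) (auto simp: integral_measure_pmf[of "set_pmf M"])

lemma one_le_mult_add_one_minus_power:
  fixes p :: real
  assumes "0 \<le> p" "p \<le> 1"
  shows "1 \<le> real d * p + (1 - p) ^ d"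
  using Bernoulli_inequality[of "- p" d] assms by simp

lemma abs_diff_le_relpow:
  fixes a :: "'a \<Rightarrow> real"
  assumes edge: "\<And>x y. (x, y) \<in> R \<Longrightarrow> \<bar>a x - a y\<bar> \<le> \<delta>"
    and path: "(u, v) \<in> R ^^ n"
  shows "\<bar>a u - a v\<bar> \<le> real n * \<delta>"
  using path
proof (induction n arbitrary: v)
  case (Suc n)
  then obtain z where z: "(u, z) \<in> R ^^ n" "(z, v) \<in> R" by auto
  have "\<bar>a u - a v\<bar> \<le> \<bar>a u - a z\<bar> + \<bar>a z - a v\<bar>" by simp
  also have "\<dots> \<le> real n * \<delta> + \<delta>" using Suc.IH[OF z(1)] edge[OF z(2)] by simp
  finally show ?case by (simp add: algebra_simps)
qed simp

lemma abs_sub_average_le: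
  fixes a :: "'a \<Rightarrow> real"
  assumes "finite V" "V \<noteq> {}" "\<And>v. v \<in> V \<Longrightarrow> \<bar>a u - a v\<bar> \<le> B"
  shows "\<bar>a u - (\<Sum>v\<in>V. a v) / real (card V)\<bar> \<le> B"
proof -
  have N: "real (card V) > 0" using assms(1,2) by (simp add: card_gt_0_iff)
  have "\<bar>a u - (\<Sum>v\<in>V. a v) / real (card V)\<bar> = \<bar>\<Sum>v\<in>V. a u - a v\<bar> / real (card V)"
    using N by (simp add: sum_subtractf field_simps)
  also have "\<dots> \<le> (\<Sum>v\<in>V. B) / real (card V)"
    using N assms(3) by (intro divide_right_mono order.trans[OF sum_abs sum_mono]) auto
  also have "\<dots> = B" using N by simp
  finally show ?thesis .
qed

subsection \<open>Pairwise averaging\<close>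

definition sum_sq_dev :: "'a set \<Rightarrow> real \<Rightarrow> ('a \<Rightarrow> real) \<Rightarrow> real" where
  "sum_sq_dev V c a = (\<Sum>x\<in>V. (a x - c)\<^sup>2)"

lemma sum_remove_two:
  assumes "finite V" "s \<in> V" "t \<in> V" "s \<noteq> t"
  shows "sum f V = f s + f t + sum f (V - {s, t})"
proof -
  have "sum f V = f s + sum f (V - {s})" using assms by (simp add: sum.remove)
  also have "sum f (V - {s}) = f t + sum f (V - {s} - {t})" using assms by (simp add: sum.remove)
  finally show ?thesis by (simp add: set_diff_eq add.assoc)
qed

lemma avg_pair_eq_outside: "x \<notin> {s, t} \<Longrightarrow> avg_pair a s t x = a x"
  by (simp add: avg_pair_def Let_def)

lemma sum_avg_pair:
  assumes "finite V" "s \<in> V" "t \<in> V" "s \<noteq> t"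
  shows "(\<Sum>x\<in>V. avg_pair a s t x) = (\<Sum>x\<in>V. a x)"
  using sum_remove_two[OF assms, of "avg_pair a s t"] sum_remove_two[OF assms, of a] assms
  by (simp add: avg_pair_eq_outside avg_pair_def Let_def)

lemma sum_sq_dev_avg_pair:
  assumes "finite V" "s \<in> V" "t \<in> V" "s \<noteq> t"
  shows "sum_sq_dev V c (avg_pair a s t) = sum_sq_dev V c a - (a s - a t)\<^sup>2 / 2"
  using sum_remove_two[OF assms, of "\<lambda>x. (avg_pair a s t x - c)\<^sup>2"]
    sum_remove_two[OF assms, of "\<lambda>x. (a x - c)\<^sup>2"] assms
  by (simp add: sum_sq_dev_def avg_pair_eq_outside avg_pair_def Let_def power2_eq_square
      field_simps)

subsection \<open>Connected graphs\<close>

locale connected_graph =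
  fixes V :: "'a set" and E :: "'a \<Rightarrow> 'a \<Rightarrow> bool"
  assumes connected: "connected_undirected_graph V E"
    and two_le_card: "2 \<le> card V"
begin

lemma finite_V: "finite V"
  using connected by (simp add: connected_undirected_graph_def)

lemma V_nonempty: "V \<noteq> {}"
  using two_le_card by auto

lemma nbrs_subset: "nbrs V E s \<subseteq> V"
  by (auto simp: nbrs_def)

lemma finite_nbrs: "finite (nbrs V E s)"
  using finite_V nbrs_subset by (rule finite_subset[rotated])

lemma nbrs_nonempty:
  assumes s: "s \<in> V"
  shows "nbrs V E s \<noteq> {}"
proof -
  obtain v where v: "v \<in> V" "v \<noteq> s"
  proof -
    have "\<not> card V \<le> Suc 0" using two_le_card by simp
    then show ?thesis
      using that s card_le_Suc0_iff_eq[OF finite_V] by blast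
  qed
  have "(\<lambda>x y. E x y \<and> x \<noteq> y)\<^sup>*\<^sup>* s v"
    using connected s v by (auto simp: connected_undirected_graph_def)
  then obtain y where "E s y" "s \<noteq> y"
    using v(2) by (cases rule: converse_rtranclpE) auto
  then have "y \<in> nbrs V E s"
    using connected by (auto simp: nbrs_def connected_undirected_graph_def)
  then show ?thesis by auto
qed

definition max_gap :: "('a \<Rightarrow> real) \<Rightarrow> 'a \<Rightarrow> real" where
  "max_gap a s = Max ((\<lambda>t. (a s - a t)\<^sup>2) ` nbrs V E s)"

lemma gap_le_max_gap: "t \<in> nbrs V E s \<Longrightarrow> (a s - a t)\<^sup>2 \<le> max_gap a s"
  unfolding max_gap_def using finite_nbrs by (intro Max_ge) auto

lemma max_gap_attained:
  assumes "s \<in> V"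
  obtains t where "t \<in> nbrs V E s" "(a s - a t)\<^sup>2 = max_gap a s"
proof -
  have "max_gap a s \<in> (\<lambda>t. (a s - a t)\<^sup>2) ` nbrs V E s"
    unfolding max_gap_def using finite_nbrs nbrs_nonempty[OF assms] by (intro Max_in) auto
  then show ?thesis using that by auto
qed

lemma max_gap_nonneg: "s \<in> V \<Longrightarrow> 0 \<le> max_gap a s"
  by (metis max_gap_attained zero_le_power2)

lemma abs_diff_le_max_gaps:
  assumes "u \<in> V" "v \<in> V"
  shows "\<bar>a u - a v\<bar> \<le> real (card V) ^ 2 * sqrt (\<Sum>s\<in>V. max_gap a s)"
proof -
  define R where "R = {(x, y). E x y \<and> x \<noteq> y}"
  define W where "W = (\<Sum>s\<in>V. max_gap a s)"
  have R_sub: "R \<subseteq> V \<times> V"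
    using connected by (auto simp: R_def connected_undirected_graph_def)
  have edge: "\<bar>a x - a y\<bar> \<le> sqrt W" if "(x, y) \<in> R" for x y
  proof -
    have x: "x \<in> V" and y: "y \<in> nbrs V E x"
      using that R_sub by (auto simp: R_def nbrs_def)
    have "(a x - a y)\<^sup>2 \<le> max_gap a x" by (rule gap_le_max_gap[OF y])
    also have "\<dots> \<le> W"
      unfolding W_def by (rule member_le_sum[OF x]) (simp_all add: max_gap_nonneg finite_V)
    finally have "(a x - a y)\<^sup>2 \<le> W" .
    then show ?thesis using real_sqrt_le_mono by fastforce
  qed
  have "(u, v) \<in> R\<^sup>*"
    using connected assms by (auto simp: R_def connected_undirected_graph_def rtranclp_rtrancl_eq)
  then obtain n where n: "n \<le> card R" "(u, v) \<in> R ^^ n"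
    using rtrancl_finite_eq_relpow[OF finite_subset[OF R_sub]] finite_V by auto
  have "card R \<le> card V ^ 2"
    using card_mono[OF _ R_sub] finite_V by (simp add: card_cartesian_product power2_eq_square)
  then have "real n \<le> real (card V) ^ 2"
    using n(1) by (metis le_trans of_nat_le_iff of_nat_power)
  moreover have "\<bar>a u - a v\<bar> \<le> real n * sqrt W"
    using abs_diff_le_relpow[OF edge n(2)] .
  ultimately show ?thesis
    unfolding W_def by (meson order.trans mult_right_mono real_sqrt_ge_zero sum_nonneg max_gap_nonneg)
qed

lemma sum_sq_dev_le_max_gaps:
  "sum_sq_dev V ((\<Sum>x\<in>V. a x) / real (card V)) a \<le> real (card V) ^ 5 * (\<Sum>s\<in>V. max_gap a s)"
proof -
  define N where "N = real (card V)"
  define W where "W = (\<Sum>s\<in>V. max_gap a s)"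
  have W_nonneg: "0 \<le> W" unfolding W_def by (simp add: sum_nonneg max_gap_nonneg)
  have "(a u - (\<Sum>x\<in>V. a x) / N)\<^sup>2 \<le> N ^ 4 * W" if u: "u \<in> V" for u
  proof -
    have "\<bar>a u - (\<Sum>x\<in>V. a x) / N\<bar> \<le> N\<^sup>2 * sqrt W"
      unfolding N_def W_def
      by (rule abs_sub_average_le[OF finite_V V_nonempty abs_diff_le_max_gaps[OF u]])
    then have "\<bar>a u - (\<Sum>x\<in>V. a x) / N\<bar>\<^sup>2 \<le> (N\<^sup>2 * sqrt W)\<^sup>2"
      by (rule power_mono) simp
    then show ?thesis using W_nonneg by (simp add: power_mult_distrib)
  qed
  then have "sum_sq_dev V ((\<Sum>x\<in>V. a x) / N) a \<le> (\<Sum>u\<in>V. N ^ 4 * W)"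
    unfolding sum_sq_dev_def by (rule sum_mono)
  also have "\<dots> = N ^ 5 * W" by (simp add: N_def numeral_eq_Suc)
  finally show ?thesis unfolding N_def W_def .
qed

end

subsection \<open>One step of sample greedy gossip\<close>

locale sgg_process = connected_graph +
  fixes p :: real and sel :: "nat \<Rightarrow> ('a \<Rightarrow> real) \<Rightarrow> 'a \<Rightarrow> 'a set \<Rightarrow> 'a"
  assumes p_nonneg: "0 \<le> p" and p_le_1: "p \<le> 1"
    and tiebreak: "valid_tiebreak V E sel"
begin

abbreviation activation_pmf :: "'a \<Rightarrow> ('a \<Rightarrow> bool) pmf" where
  "activation_pmf s \<equiv> Pi_pmf (nbrs V E s) False (\<lambda>_. bernoulli_pmf p)"

definition partner_pmf :: "nat \<Rightarrow> ('a \<Rightarrow> real) \<Rightarrow> 'a \<Rightarrow> ('a \<Rightarrow> bool) \<Rightarrow> 'a pmf" where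
  "partner_pmf l a s act = (let A = {t \<in> nbrs V E s. act t} in
     if A \<noteq> {} then return_pmf (sel l a s A) else pmf_of_set (nbrs V E s))"

definition expected_gap :: "nat \<Rightarrow> ('a \<Rightarrow> real) \<Rightarrow> 'a \<Rightarrow> real" where
  "expected_gap l a s = measure_pmf.expectation (activation_pmf s)
     (\<lambda>act. measure_pmf.expectation (partner_pmf l a s act) (\<lambda>t. (a s - a t)\<^sup>2))"

lemma sgg_step_eq: "sgg_step V E p sel l a = pmf_of_set V \<bind> (\<lambda>s. activation_pmf s \<bind>
    (\<lambda>act. map_pmf (avg_pair a s) (partner_pmf l a s act)))"
  by (simp add: sgg_step_def partner_pmf_def Let_def map_pmf_def)

lemma finite_set_activation_pmf: "finite (set_pmf (activation_pmf s))"
  by (rule finite_subset[OF set_Pi_pmf_subset'[OF finite_nbrs]])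
    (auto intro!: finite_PiE_dflt simp: finite_nbrs)

lemma sel_maximises:
  assumes "s \<in> V" "A \<subseteq> nbrs V E s" "A \<noteq> {}"
  shows "sel l a s A \<in> A" and "t \<in> A \<Longrightarrow> (a s - a t)\<^sup>2 \<le> (a s - a (sel l a s A))\<^sup>2"
proof -
  have "sel l a s A \<in> A \<and> (\<forall>t\<in>A. (a s - a t)\<^sup>2 \<le> (a s - a (sel l a s A))\<^sup>2)"
    using tiebreak assms unfolding valid_tiebreak_def by blast
  then show "sel l a s A \<in> A" and "t \<in> A \<Longrightarrow> (a s - a t)\<^sup>2 \<le> (a s - a (sel l a s A))\<^sup>2"
    by auto
qed

lemma set_partner_pmf:
  assumes s: "s \<in> V"
  shows "set_pmf (partner_pmf l a s act) \<subseteq> nbrs V E s"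
proof (cases "{t \<in> nbrs V E s. act t} = {}")
  case True
  then have "partner_pmf l a s act = pmf_of_set (nbrs V E s)"
    by (simp add: partner_pmf_def)
  then show ?thesis using nbrs_nonempty[OF s] finite_nbrs by simp
next
  case False
  have "sel l a s {t \<in> nbrs V E s. act t} \<in> {t \<in> nbrs V E s. act t}"
    by (rule sel_maximises(1)[OF s _ False]) auto
  then show ?thesis using False by (auto simp: partner_pmf_def Let_def)
qed

lemma finite_set_partner_pmf: "s \<in> V \<Longrightarrow> finite (set_pmf (partner_pmf l a s act))"
  using set_partner_pmf finite_nbrs by (metis finite_subset)

lemma set_sgg_step:
  assumes "a' \<in> set_pmf (sgg_step V E p sel l a)"
  obtains s t where "s \<in> V" "t \<in> nbrs V E s" "a' = avg_pair a s t"
proof -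
  from assms obtain s act t where "s \<in> V" "t \<in> set_pmf (partner_pmf l a s act)"
      "a' = avg_pair a s t"
    unfolding sgg_step_eq using finite_V V_nonempty by (auto simp: set_bind_pmf)
  then show ?thesis using that set_partner_pmf by blast
qed

lemma finite_set_sgg_step: "finite (set_pmf (sgg_step V E p sel l a))"
proof -
  have "set_pmf (sgg_step V E p sel l a) \<subseteq> (\<lambda>(s, t). avg_pair a s t) ` (V \<times> V)"
  proof
    fix a' assume "a' \<in> set_pmf (sgg_step V E p sel l a)"
    then obtain s t where "s \<in> V" "t \<in> nbrs V E s" "a' = avg_pair a s t"
      by (rule set_sgg_step)
    then show "a' \<in> (\<lambda>(s, t). avg_pair a s t) ` (V \<times> V)"
      using nbrs_subset by (intro image_eqI[of _ _ "(s, t)"]) auto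
  qed
  then show ?thesis using finite_V finite_subset by blast
qed

lemma finite_set_sgg_dist: "finite (set_pmf (sgg_dist V E p sel a0 l))"
  by (induction l) (simp_all add: set_bind_pmf finite_set_sgg_step)

lemma sum_sgg_dist:
  "a \<in> set_pmf (sgg_dist V E p sel a0 l) \<Longrightarrow> (\<Sum>x\<in>V. a x) = (\<Sum>x\<in>V. a0 x)"
proof (induction l arbitrary: a)
  case (Suc l)
  then obtain b where b: "b \<in> set_pmf (sgg_dist V E p sel a0 l)"
    "a \<in> set_pmf (sgg_step V E p sel (Suc l) b)"
    by (auto simp: set_bind_pmf)
  then obtain s t where "s \<in> V" "t \<in> nbrs V E s" "a = avg_pair b s t"
    by (elim set_sgg_step)
  then show ?case
    using Suc.IH[OF b(1)] sum_avg_pair[OF finite_V, of s t b] by (auto simp: nbrs_def)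
qed simp

lemma partner_gap_lower_bound:
  assumes s: "s \<in> V" and tm: "tm \<in> nbrs V E s" "(a s - a tm)\<^sup>2 = max_gap a s"
  shows "max_gap a s * indicator {act. act tm} act
           + max_gap a s / card (nbrs V E s) * indicator {\<lambda>_. False} act
         \<le> measure_pmf.expectation (partner_pmf l a s act) (\<lambda>t. (a s - a t)\<^sup>2)"
    (is "_ \<le> ?gap")
proof (cases "act tm")
  case True
  let ?A = "{t \<in> nbrs V E s. act t}"
  have tm_A: "tm \<in> ?A" using True tm by auto
  have "(a s - a tm)\<^sup>2 \<le> (a s - a (sel l a s ?A))\<^sup>2"
    using tm_A by (intro sel_maximises(2)[OF s _ _ tm_A]) auto
  then have "max_gap a s \<le> (a s - a (sel l a s ?A))\<^sup>2"
    using tm(2) by simp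
  moreover have "?gap = (a s - a (sel l a s ?A))\<^sup>2"
    using tm_A by (auto simp: partner_pmf_def Let_def)
  moreover have "act \<noteq> (\<lambda>_. False)" using True by auto
  ultimately show ?thesis using True by simp
next
  case inactive: False
  show ?thesis
  proof (cases "act = (\<lambda>_. False)")
    case True
    then have "?gap = (\<Sum>t\<in>nbrs V E s. (a s - a t)\<^sup>2) / card (nbrs V E s)"
      using nbrs_nonempty[OF s] finite_nbrs by (simp add: partner_pmf_def integral_pmf_of_set)
    moreover have "max_gap a s \<le> (\<Sum>t\<in>nbrs V E s. (a s - a t)\<^sup>2)"
      using tm member_le_sum[of tm "nbrs V E s" "\<lambda>t. (a s - a t)\<^sup>2"] finite_nbrs by simp
    ultimately show ?thesis using inactive True by (simp add: divide_right_mono)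
  next
    case False
    have "0 \<le> ?gap" by (rule integral_nonneg_AE) auto
    then show ?thesis using inactive False by simp
  qed
qed

lemma measure_activation_pmf_active:
  assumes "t \<in> nbrs V E s"
  shows "measure (activation_pmf s) {act. act t} = p"
proof -
  have "measure (activation_pmf s) {act. act t}
      = measure (map_pmf (\<lambda>act. act t) (activation_pmf s)) {True}"
    by (simp add: measure_map_pmf vimage_def)
  also have "map_pmf (\<lambda>act. act t) (activation_pmf s) = bernoulli_pmf p"
    using assms by (simp add: Pi_pmf_component[OF finite_nbrs])
  finally show ?thesis by (simp add: measure_pmf_single p_nonneg p_le_1)
qed

lemma measure_activation_pmf_none:
  "measure (activation_pmf s) {\<lambda>_. False} = (1 - p) ^ card (nbrs V E s)"
  using p_nonneg p_le_1 by (simp add: measure_pmf_single pmf_Pi[OF finite_nbrs])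

lemma max_gap_div_card_le_expected_gap:
  assumes s: "s \<in> V"
  shows "max_gap a s / card (nbrs V E s) \<le> expected_gap l a s"
proof -
  define d where "d = card (nbrs V E s)"
  define M where "M = max_gap a s"
  obtain tm where tm: "tm \<in> nbrs V E s" "(a s - a tm)\<^sup>2 = M"
    unfolding M_def by (rule max_gap_attained[OF s])
  have d_pos: "0 < d"
    unfolding d_def using finite_nbrs nbrs_nonempty[OF s] by (simp add: card_gt_0_iff)
  have int: "integrable (activation_pmf s) f" for f :: "_ \<Rightarrow> real"
    by (rule integrable_measure_pmf_finite[OF finite_set_activation_pmf])
  have "M / d * 1 \<le> M / d * (real d * p + (1 - p) ^ d)"
    using one_le_mult_add_one_minus_power[OF p_nonneg p_le_1] max_gap_nonneg[OF s]
    by (intro mult_left_mono) (auto simp: M_def)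
  also have "\<dots> = M * p + M / d * (1 - p) ^ d"
    using d_pos by (simp add: field_simps)
  also have "\<dots> = measure_pmf.expectation (activation_pmf s)
      (\<lambda>act. M * indicator {act. act tm} act + M / d * indicator {\<lambda>_. False} act)"
    using tm(1) by (simp add: Bochner_Integration.integral_add[OF int int] d_def
        measure_activation_pmf_active measure_activation_pmf_none)
  also have "\<dots> \<le> expected_gap l a s"
    unfolding expected_gap_def M_def d_def
    by (rule Bochner_Integration.integral_mono[OF int int])
      (rule partner_gap_lower_bound[OF s tm[unfolded M_def]])
  finally show ?thesis by (simp add: M_def d_def)
qed

lemma expected_sum_sq_dev_partner:
  assumes s: "s \<in> V"
  shows "measure_pmf.expectation (partner_pmf l a s act) (\<lambda>t. sum_sq_dev V c (avg_pair a s t))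
       = sum_sq_dev V c a - measure_pmf.expectation (partner_pmf l a s act) (\<lambda>t. (a s - a t)\<^sup>2) / 2"
proof -
  let ?T = "partner_pmf l a s act"
  have int: "integrable ?T f" for f :: "_ \<Rightarrow> real"
    by (rule integrable_measure_pmf_finite[OF finite_set_partner_pmf[OF s]])
  have "measure_pmf.expectation ?T (\<lambda>t. sum_sq_dev V c (avg_pair a s t))
      = measure_pmf.expectation ?T (\<lambda>t. sum_sq_dev V c a - (a s - a t)\<^sup>2 / 2)"
  proof (intro integral_cong_AE AE_pmfI)
    fix t assume "t \<in> set_pmf ?T"
    then have "t \<in> nbrs V E s" using set_partner_pmf[OF s] by blast
    then show "sum_sq_dev V c (avg_pair a s t) = sum_sq_dev V c a - (a s - a t)\<^sup>2 / 2"
      by (intro sum_sq_dev_avg_pair[OF finite_V s]) (auto simp: nbrs_def)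
  qed simp_all
  also have "\<dots> = sum_sq_dev V c a - measure_pmf.expectation ?T (\<lambda>t. (a s - a t)\<^sup>2) / 2"
    by (simp add: Bochner_Integration.integral_diff[OF int int])
  finally show ?thesis .
qed

lemma expected_sum_sq_dev_given_node:
  assumes s: "s \<in> V"
  shows "measure_pmf.expectation
           (activation_pmf s \<bind> (\<lambda>act. map_pmf (avg_pair a s) (partner_pmf l a s act)))
           (sum_sq_dev V c)
       = sum_sq_dev V c a - expected_gap l a s / 2"
proof -
  have int: "integrable (activation_pmf s) f" for f :: "_ \<Rightarrow> real"
    by (rule integrable_measure_pmf_finite[OF finite_set_activation_pmf])
  have "measure_pmf.expectation
           (activation_pmf s \<bind> (\<lambda>act. map_pmf (avg_pair a s) (partner_pmf l a s act)))
           (sum_sq_dev V c)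
      = measure_pmf.expectation (activation_pmf s) (\<lambda>act. measure_pmf.expectation
           (partner_pmf l a s act) (\<lambda>t. sum_sq_dev V c (avg_pair a s t)))"
    using finite_set_activation_pmf finite_set_partner_pmf[OF s]
    by (subst expectation_bind_pmf_finite) auto
  also have "\<dots> = sum_sq_dev V c a - expected_gap l a s / 2"
    unfolding expected_sum_sq_dev_partner[OF s] expected_gap_def
    by (simp add: Bochner_Integration.integral_diff[OF int int])
  finally show ?thesis .
qed

lemma expected_sum_sq_dev_sgg_step_eq:
  "measure_pmf.expectation (sgg_step V E p sel l a) (sum_sq_dev V c)
     = sum_sq_dev V c a - (\<Sum>s\<in>V. expected_gap l a s) / (2 * real (card V))"
proof -
  define N where "N = real (card V)"
  have N_pos: "0 < N" unfolding N_def using finite_V V_nonempty by (simp add: card_gt_0_iff)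
  have fin: "finite (set_pmf (activation_pmf s \<bind>
      (\<lambda>act. map_pmf (avg_pair a s) (partner_pmf l a s act))))" if "s \<in> V" for s
    using finite_set_activation_pmf finite_set_partner_pmf[OF that] by (simp add: set_bind_pmf)
  have "measure_pmf.expectation (sgg_step V E p sel l a) (sum_sq_dev V c)
      = (\<Sum>s\<in>V. measure_pmf.expectation (activation_pmf s \<bind>
          (\<lambda>act. map_pmf (avg_pair a s) (partner_pmf l a s act))) (sum_sq_dev V c) /\<^sub>R N)"
    unfolding sgg_step_eq N_def by (rule pmf_expectation_bind_pmf_of_set[OF V_nonempty finite_V fin])
  also have "\<dots> = (\<Sum>s\<in>V. (sum_sq_dev V c a - expected_gap l a s / 2) / N)"
    by (rule sum.cong[OF refl]) (simp add: expected_sum_sq_dev_given_node field_simps)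
  also have "\<dots> = (\<Sum>s\<in>V. sum_sq_dev V c a / N) - (\<Sum>s\<in>V. expected_gap l a s) / (2 * N)"
    by (simp add: sum_subtractf sum_divide_distrib diff_divide_distrib)
  also have "(\<Sum>s\<in>V. sum_sq_dev V c a / N) = sum_sq_dev V c a"
    using N_pos by (simp add: N_def)
  finally show ?thesis unfolding N_def .
qed

lemma expected_sum_sq_dev_sgg_step_le:
  "measure_pmf.expectation (sgg_step V E p sel l a) (sum_sq_dev V c)
     \<le> sum_sq_dev V c a - (\<Sum>s\<in>V. max_gap a s) / (2 * real (card V) ^ 2)"
proof -
  define N where "N = real (card V)"
  have N_pos: "0 < N" unfolding N_def using finite_V V_nonempty by (simp add: card_gt_0_iff)
  have "max_gap a s / N \<le> expected_gap l a s" if s: "s \<in> V" for s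
  proof -
    have "0 < card (nbrs V E s)" "card (nbrs V E s) \<le> card V"
      using finite_nbrs nbrs_nonempty[OF s] card_mono[OF finite_V nbrs_subset]
      by (auto simp: card_gt_0_iff)
    then have "max_gap a s / N \<le> max_gap a s / card (nbrs V E s)"
      unfolding N_def using max_gap_nonneg[OF s] by (intro divide_left_mono) auto
    also have "\<dots> \<le> expected_gap l a s" by (rule max_gap_div_card_le_expected_gap[OF s])
    finally show ?thesis .
  qed
  then have "(\<Sum>s\<in>V. max_gap a s) / N \<le> (\<Sum>s\<in>V. expected_gap l a s)"
    by (simp add: sum_divide_distrib sum_mono)
  then have "(\<Sum>s\<in>V. max_gap a s) / N / (2 * N) \<le> (\<Sum>s\<in>V. expected_gap l a s) / (2 * N)"
    using N_pos by (intro divide_right_mono) auto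
  then show ?thesis
    unfolding expected_sum_sq_dev_sgg_step_eq N_def by (simp add: power2_eq_square ac_simps)
qed

definition contraction_rate :: real where
  "contraction_rate = 1 / (2 * real (card V) ^ 7)"

lemma contraction_rate_pos: "0 < contraction_rate"
  using two_le_card by (simp add: contraction_rate_def)

lemma contraction_rate_le_1: "contraction_rate \<le> 1"
proof -
  have "1 \<le> real (card V) ^ 7"
    using two_le_card by (simp add: one_le_power)
  then show ?thesis
    unfolding contraction_rate_def by (auto simp: divide_le_eq_1)
qed

lemma expected_sum_sq_dev_sgg_step_contracts:
  assumes c: "c = (\<Sum>x\<in>V. a x) / real (card V)"
  shows "measure_pmf.expectation (sgg_step V E p sel l a) (sum_sq_dev V c)
           \<le> (1 - contraction_rate) * sum_sq_dev V c a"
proof -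
  define N where "N = real (card V)"
  define W where "W = (\<Sum>s\<in>V. max_gap a s)"
  have N_pos: "0 < N" using two_le_card by (simp add: N_def)
  have "sum_sq_dev V c a / (2 * N ^ 7) \<le> N ^ 5 * W / (2 * N ^ 7)"
    using sum_sq_dev_le_max_gaps[of a] N_pos unfolding c N_def W_def
    by (intro divide_right_mono) auto
  also have "\<dots> = W / (2 * N\<^sup>2)"
    using N_pos by (simp add: field_simps power_add[symmetric] numeral_eq_Suc)
  finally have "sum_sq_dev V c a - W / (2 * N\<^sup>2) \<le> (1 - 1 / (2 * N ^ 7)) * sum_sq_dev V c a"
    by (simp add: algebra_simps)
  with expected_sum_sq_dev_sgg_step_le[of l a c] show ?thesis
    unfolding N_def W_def contraction_rate_def by linarith
qed

lemma expected_sum_sq_dev_sgg_dist: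
  assumes c: "c = (\<Sum>x\<in>V. a0 x) / real (card V)"
  shows "measure_pmf.expectation (sgg_dist V E p sel a0 l) (sum_sq_dev V c)
           \<le> (1 - contraction_rate) ^ l * sum_sq_dev V c a0"
proof (induction l)
  case (Suc l)
  let ?D = "sgg_dist V E p sel a0 l"
  have int: "integrable ?D f" for f :: "_ \<Rightarrow> real"
    by (rule integrable_measure_pmf_finite[OF finite_set_sgg_dist])
  have "measure_pmf.expectation (sgg_dist V E p sel a0 (Suc l)) (sum_sq_dev V c)
      = measure_pmf.expectation ?D
          (\<lambda>a. measure_pmf.expectation (sgg_step V E p sel (Suc l) a) (sum_sq_dev V c))"
    by (simp only: sgg_dist.simps)
      (rule expectation_bind_pmf_finite[OF finite_set_sgg_dist finite_set_sgg_step])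
  also have "\<dots> \<le> measure_pmf.expectation ?D (\<lambda>a. (1 - contraction_rate) * sum_sq_dev V c a)"
    using c sum_sgg_dist
    by (intro integral_mono_AE[OF int int] AE_pmfI) (simp add: expected_sum_sq_dev_sgg_step_contracts)
  also have "\<dots> \<le> (1 - contraction_rate) * ((1 - contraction_rate) ^ l * sum_sq_dev V c a0)"
    using Suc.IH contraction_rate_le_1 by (simp add: mult_left_mono)
  finally show ?case by simp
qed simp

end

theorem theorem1:
  fixes V :: "'a set" and E :: "'a \<Rightarrow> 'a \<Rightarrow> bool" and p :: real
    and a0 :: "'a \<Rightarrow> real" and sel :: "nat \<Rightarrow> ('a \<Rightarrow> real) \<Rightarrow> 'a \<Rightarrow> 'a set \<Rightarrow> 'a"
  assumes "connected_undirected_graph V E"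
    and "card V \<ge> 2"
    and "0 \<le> p" and "p \<le> 1"
    and "valid_tiebreak V E sel"
  shows "(\<lambda>l. measure_pmf.expectation (sgg_dist V E p sel a0 l)
            (\<lambda>a. \<Sum>s\<in>V. (a s - (\<Sum>u\<in>V. a0 u) / real (card V))^2))
         \<longlonglongrightarrow> 0"
proof -
  interpret sgg_process V E p sel
    using assms by unfold_locales
  define c where "c = (\<Sum>u\<in>V. a0 u) / real (card V)"
  let ?F = "\<lambda>l. measure_pmf.expectation (sgg_dist V E p sel a0 l) (sum_sq_dev V c)"
  have bound_to_0: "(\<lambda>l. (1 - contraction_rate) ^ l * sum_sq_dev V c a0) \<longlonglongrightarrow> 0"
    using contraction_rate_pos contraction_rate_le_1
    by (intro tendsto_mult_left_zero[OF LIMSEQ_power_zero]) auto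
  have nonneg: "\<forall>l. 0 \<le> ?F l"
    unfolding sum_sq_dev_def by (intro allI integral_nonneg_AE AE_I2 sum_nonneg) simp
  have bounded: "\<forall>l. ?F l \<le> (1 - contraction_rate) ^ l * sum_sq_dev V c a0"
    using expected_sum_sq_dev_sgg_dist[OF c_def] by blast
  show ?thesis
    using tendsto_sandwich[OF always_eventually[OF nonneg] always_eventually[OF bounded]
        tendsto_const bound_to_0]
    unfolding sum_sq_dev_def c_def .
qed

end
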